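(* Let $H$ be a real Hilbert space, $c_0$ the Banach space of real sequences converging to $0$ (sup norm), with dual identified with $\ell^1$, let $A:H\to c_0$ be bounded linear with adjoint $A^*:\ell^1\to H$, let $H_n\subset H$ be a subspace of dimension $n$, and let $f^\delta\in H$. Assume $\mathcal N(A)\cap H_n=\{0\}$. Then the set $$\operatorname{argmin}\Big\{\|u\|_1 \;:\; u\in\ell^1,\ \langle z,A^*u\rangle=\langle z,f^\delta\rangle \text{ for all } z\in H_n\Big\}$$ is nonempty.
   Context: $A^*:\ell^1\to H$ is defined by $\langle A^*u,z\rangle=\sum_i u_i (Az)_i$ for $u\in\ell^1$, $z\in H$; it is weak*-to-weak continuous. $\mathcal N(A)$ denotes the null space of $A$. The constraint is equivalent to $P_nA^*u=P_nf^\delta$, where $P_n$ is the orthogonal projection onto $H_n$. *)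

theory Defs
  imports "HOL-Analysis.Analysis"
begin

definition in_l1 :: "(nat \<Rightarrow> real) \<Rightarrow> bool" where
  "in_l1 u \<longleftrightarrow> summable (\<lambda>i. \<bar>u i\<bar>)"

definition l1_norm :: "(nat \<Rightarrow> real) \<Rightarrow> real" where
  "l1_norm u = (\<Sum>i. \<bar>u i\<bar>)"

definition bounded_linear_c0 :: "('a::real_normed_vector \<Rightarrow> (nat \<Rightarrow> real)) \<Rightarrow> bool" where
  "bounded_linear_c0 A \<longleftrightarrow> (\<forall>x y i. A (x + y) i = A x i + A y i)
     \<and> (\<forall>c x i. A (c *\<^sub>R x) i = c * A x i) \<and> (\<forall>z. A z \<longlonglongrightarrow> 0)
     \<and> (\<exists>K. \<forall>z i. \<bar>A z i\<bar> \<le> K * norm z)"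

text \<open>The pairing of the adjoint: <z, A^* u> = sum_i u_i (A z)_i.\<close>
definition adj_pair :: "('a \<Rightarrow> (nat \<Rightarrow> real)) \<Rightarrow> (nat \<Rightarrow> real) \<Rightarrow> 'a \<Rightarrow> real" where
  "adj_pair A u z = (\<Sum>i. u i * A z i)"

definition feasible :: "('a::real_inner \<Rightarrow> (nat \<Rightarrow> real)) \<Rightarrow> 'a set \<Rightarrow> 'a \<Rightarrow> (nat \<Rightarrow> real) set" where
  "feasible A Hn f = {u. in_l1 u \<and> (\<forall>z\<in>Hn. adj_pair A u z = z \<bullet> f)}"

definition argmin_l1 :: "('a::real_inner \<Rightarrow> (nat \<Rightarrow> real)) \<Rightarrow> 'a set \<Rightarrow> 'a \<Rightarrow> (nat \<Rightarrow> real) set" where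
  "argmin_l1 A Hn f = {u \<in> feasible A Hn f. \<forall>v \<in> feasible A Hn f. l1_norm u \<le> l1_norm v}"

end

(*
  Feasibility: on the finite-dimensional space Hn every coordinate functional z |-> (A z)_i is
  represented by some w_i in Hn. A vector of Hn orthogonal to all w_i lies in the null space of A,
  hence is 0, so the w_i span Hn. The orthogonal projection of f onto Hn is therefore a finite
  combination of the w_i, and its coefficients form a finitely supported feasible u.

  Existence of a minimiser is the direct method. A minimising sequence is bounded in l1, so by
  Tychonoff a subsequence converges pointwise. Because each A z is a null sequence, the pairing
  with A z passes to pointwise limits of l1-bounded sequences (this is weak* convergence), so the
  limit is feasible; and the l1 norm is lower semicontinuous under pointwise limits.
*)

theory Submission
  imports Defs
begin

lemma Gram_Schmidt_step_finite:
  fixes S :: "'a::real_inner set"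
  assumes "finite S" and "pairwise orthogonal S" and "x \<in> span S"
  shows "orthogonal x (a - (\<Sum>b\<in>S. (b \<bullet> a / (b \<bullet> b)) *\<^sub>R b))"
proof -
  have "orthogonal (a - (\<Sum>b\<in>S. (b \<bullet> a / (b \<bullet> b)) *\<^sub>R b)) y" if "y \<in> S" for y
  proof -
    have "a \<bullet> y = (\<Sum>b\<in>S. if b = y then b \<bullet> a else 0)"
      by (simp add: assms(1) inner_commute that)
    also have "\<dots> = (\<Sum>b\<in>S. b \<bullet> a * (b \<bullet> y) / (b \<bullet> b))"
      using assms(2) that by (intro sum.cong) (auto simp: orthogonal_def pairwise_def)
    finally show ?thesis
      by (simp add: orthogonal_def algebra_simps inner_sum_left)
  qed
  then show ?thesis
    using orthogonal_to_span orthogonal_commute assms(3) by blast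
qed

lemma orthogonal_projection_exists:
  fixes S :: "'a::real_inner set"
  assumes "finite S"
  obtains p where "p \<in> span S" "\<And>y. y \<in> span S \<Longrightarrow> orthogonal (x - p) y"
proof -
  obtain C where C: "finite C" "span C = span S" "pairwise orthogonal C"
    using basis_orthogonal[OF assms] by blast
  let ?p = "\<Sum>b\<in>C. (b \<bullet> x / (b \<bullet> b)) *\<^sub>R b"
  have "?p \<in> span S"
    by (simp flip: C(2) add: span_base span_mul span_sum)
  moreover have "orthogonal (x - ?p) y" if "y \<in> span S" for y
    using Gram_Schmidt_step_finite[OF C(1,3), of y x] that C(2)
    by (simp add: orthogonal_commute)
  ultimately show ?thesis
    using that by blast
qed

lemma Riesz_representation_finite_span:
  fixes \<phi> :: "'a::real_inner \<Rightarrow> real"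
  assumes "linear \<phi>" and "finite B"
  shows "\<exists>w\<in>span B. \<forall>z\<in>span B. \<phi> z = z \<bullet> w"
proof -
  obtain C where C: "finite C" "span C = span B" "pairwise orthogonal C"
    using basis_orthogonal[OF assms(2)] by blast
  define w where "w = (\<Sum>c\<in>C. (\<phi> c / (c \<bullet> c)) *\<^sub>R c)"
  have "w \<in> span B"
    unfolding w_def by (simp flip: C(2) add: span_base span_mul span_sum)
  moreover have "\<phi> z = z \<bullet> w" if "z \<in> span B" for z
  proof -
    let ?p = "\<Sum>c\<in>C. (c \<bullet> z / (c \<bullet> c)) *\<^sub>R c"
    have "?p \<in> span C"
      by (simp add: span_base span_mul span_sum)
    then have "z - ?p \<in> span C"
      using that C(2) span_diff by blast
    then have "z = ?p"
      using Gram_Schmidt_step_finite[OF C(1,3), of "z - ?p" z] by (simp add: orthogonal_self)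
    then have "\<phi> z = \<phi> ?p"
      by simp
    also have "\<dots> = (\<Sum>c\<in>C. (c \<bullet> z / (c \<bullet> c)) * \<phi> c)"
      by (simp add: linear_sum[OF assms(1)] linear_scale[OF assms(1)])
    also have "\<dots> = z \<bullet> w"
      unfolding w_def inner_sum_right inner_scaleR_right
      by (intro sum.cong) (simp_all add: inner_commute)
    finally show ?thesis .
  qed
  ultimately show ?thesis
    by blast
qed

lemma span_eq_if_orthogonal_complement_trivial:
  fixes S :: "'a::real_inner set"
  assumes "finite B" and "S \<subseteq> span B"
    and "\<And>y. y \<in> span B \<Longrightarrow> (\<And>s. s \<in> S \<Longrightarrow> orthogonal y s) \<Longrightarrow> y = 0"
  shows "span S = span B"
proof
  show "span S \<subseteq> span B"
    by (rule span_minimal[OF assms(2) subspace_span])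
  show "span B \<subseteq> span S"
  proof
    fix x assume x: "x \<in> span B"
    obtain T where T: "T \<subseteq> S" "independent T" "S \<subseteq> span T"
      by (rule basis_exists[of S])
    have "T \<subseteq> span B"
      using T(1) assms(2) by blast
    then have "finite T"
      using independent_span_bound[OF assms(1) T(2)] by blast
    then obtain p where p: "p \<in> span T" "\<And>y. y \<in> span T \<Longrightarrow> orthogonal (x - p) y"
      using orthogonal_projection_exists[of T x] by blast
    have "span T \<subseteq> span B"
      using \<open>T \<subseteq> span B\<close> by (rule span_minimal[OF _ subspace_span])
    then have "x - p \<in> span B"
      using x p(1) by (blast intro: span_diff)
    moreover have "orthogonal (x - p) s" if "s \<in> S" for s
      using p(2) T(3) that by blast
    ultimately have "x = p"
      using assms(3) by fastforce
    then show "x \<in> span S"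
      using p(1) span_mono[OF T(1)] by blast
  qed
qed

lemma span_range_finite_combination:
  fixes w :: "'i \<Rightarrow> 'a::real_vector"
  assumes "x \<in> span (range w)"
  obtains J c where "finite J" "x = (\<Sum>i\<in>J. c i *\<^sub>R w i)"
proof -
  obtain t r where t: "finite t" "t \<subseteq> range w" and x: "x = (\<Sum>a\<in>t. r a *\<^sub>R a)"
    using assms unfolding span_explicit by blast
  have "x = (\<Sum>a\<in>t. r (w (inv w a)) *\<^sub>R w (inv w a))"
    unfolding x using t(2) by (intro sum.cong) (auto simp: f_inv_into_f)
  also have "\<dots> = (\<Sum>i\<in>inv w ` t. r (w i) *\<^sub>R w i)"
    by (rule sum.reindex[OF inj_on_inv_into[OF t(2)], symmetric, unfolded comp_def])
  finally show ?thesis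
    by (rule that[OF finite_imageI[OF t(1)]])
qed

lemma bounded_linear_c0_coordinate_linear:
  assumes "bounded_linear_c0 A"
  shows "linear (\<lambda>z. A z i)"
proof (rule linearI)
  show "A (x + y) i = A x i + A y i" for x y
    using assms by (simp add: bounded_linear_c0_def)
  show "A (c *\<^sub>R x) i = c *\<^sub>R A x i" for c x
    using assms by (simp add: bounded_linear_c0_def)
qed

lemma feasible_nonempty:
  fixes A :: "'a::real_inner \<Rightarrow> (nat \<Rightarrow> real)"
  assumes A: "bounded_linear_c0 A" and "finite B"
    and inj: "\<And>z. z \<in> span B \<Longrightarrow> (\<And>i. A z i = 0) \<Longrightarrow> z = 0"
  shows "feasible A (span B) f \<noteq> {}"
proof -
  have "\<exists>w\<in>span B. \<forall>z\<in>span B. A z i = z \<bullet> w" for i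
    by (rule Riesz_representation_finite_span[OF bounded_linear_c0_coordinate_linear[OF A] \<open>finite B\<close>])
  then obtain w where w: "\<And>i. w i \<in> span B" and Aw: "\<And>z i. z \<in> span B \<Longrightarrow> A z i = z \<bullet> w i"
    by metis
  have span_w: "span (range w) = span B"
    using \<open>finite B\<close> w inj Aw by (intro span_eq_if_orthogonal_complement_trivial)
      (auto simp: orthogonal_def)
  obtain g where g: "g \<in> span B" "\<And>y. y \<in> span B \<Longrightarrow> orthogonal (f - g) y"
    using orthogonal_projection_exists[OF \<open>finite B\<close>] by blast
  obtain J c where J: "finite J" and gc: "g = (\<Sum>i\<in>J. c i *\<^sub>R w i)"
    using span_range_finite_combination g(1) span_w by blast
  define u where "u i = (if i \<in> J then c i else 0)" for i
  have "in_l1 u"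
    unfolding in_l1_def by (rule summable_finite[OF J]) (simp add: u_def)
  moreover have "adj_pair A u z = z \<bullet> f" if z: "z \<in> span B" for z
  proof -
    have "adj_pair A u z = (\<Sum>i\<in>J. c i * (z \<bullet> w i))"
      unfolding adj_pair_def by (subst suminf_finite[OF J]) (simp_all add: u_def Aw[OF z])
    also have "\<dots> = z \<bullet> g"
      by (simp add: gc inner_sum_right)
    also have "\<dots> = z \<bullet> f"
      using g(2)[OF z] by (simp add: orthogonal_def inner_diff_left inner_commute[of z])
    finally show ?thesis .
  qed
  ultimately show ?thesis
    unfolding feasible_def by blast
qed

lemma abs_le_l1_norm:
  assumes "in_l1 u"
  shows "\<bar>u i\<bar> \<le> l1_norm u"
  using sum_le_suminf[of "\<lambda>i. \<bar>u i\<bar>" "{i}"] assms by (simp add: in_l1_def l1_norm_def)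

lemma l1_norm_nonneg:
  assumes "in_l1 u"
  shows "0 \<le> l1_norm u"
  using assms unfolding in_l1_def l1_norm_def by (simp add: suminf_nonneg)

lemma l1_norm_le_pointwise_limit:
  assumes "\<And>k. in_l1 (u k)" and "eventually (\<lambda>k. l1_norm (u k) \<le> M) sequentially"
    and "\<And>i. (\<lambda>k. u k i) \<longlonglongrightarrow> v i"
  shows "in_l1 v" and "l1_norm v \<le> M"
proof -
  have partial: "(\<Sum>i<N. \<bar>v i\<bar>) \<le> M" for N
  proof (rule tendsto_upperbound)
    show "(\<lambda>k. \<Sum>i<N. \<bar>u k i\<bar>) \<longlonglongrightarrow> (\<Sum>i<N. \<bar>v i\<bar>)"
      by (intro tendsto_sum tendsto_rabs assms(3))
    have partial_le: "(\<Sum>i<N. \<bar>u k i\<bar>) \<le> l1_norm (u k)" for k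
      using assms(1) by (simp add: in_l1_def l1_norm_def sum_le_suminf)
    show "eventually (\<lambda>k. (\<Sum>i<N. \<bar>u k i\<bar>) \<le> M) sequentially"
      using assms(2) by (rule eventually_mono) (rule order_trans[OF partial_le])
  qed simp
  have "summable (\<lambda>i. \<bar>v i\<bar>)"
    using partial by (intro summableI_nonneg_bounded) auto
  then show "in_l1 v" and "l1_norm v \<le> M"
    using suminf_le_const partial by (auto simp: in_l1_def l1_norm_def)
qed

lemma summable_l1_mult_bounded:
  assumes "in_l1 u" and "\<And>i. \<bar>a i\<bar> \<le> B"
  shows "summable (\<lambda>i. \<bar>u i * a i\<bar>)"
proof (rule summable_comparison_test')
  show "summable (\<lambda>i. \<bar>u i\<bar> * B)"
    using assms(1) by (simp add: in_l1_def summable_mult2)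
  show "norm \<bar>u i * a i\<bar> \<le> \<bar>u i\<bar> * B" for i
    by (simp add: abs_mult assms(2) mult_left_mono)
qed

lemma abs_suminf_mult_le_initial_plus_tail:
  fixes d a :: "nat \<Rightarrow> real"
  assumes d: "summable (\<lambda>i. \<bar>d i\<bar>)" and a: "\<And>i. N \<le> i \<Longrightarrow> \<bar>a i\<bar> \<le> \<delta>"
  shows "\<bar>\<Sum>i. d i * a i\<bar> \<le> \<bar>\<Sum>i<N. d i * a i\<bar> + (\<Sum>i. \<bar>d i\<bar>) * \<delta>"
proof -
  have \<delta>: "0 \<le> \<delta>"
    using a[of N] by simp
  have le: "\<bar>d (i + N) * a (i + N)\<bar> \<le> \<bar>d (i + N)\<bar> * \<delta>" for i
    unfolding abs_mult using a[of "i + N"] by (simp add: mult_left_mono)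
  have d_tail: "summable (\<lambda>i. \<bar>d (i + N)\<bar>)"
    using d summable_iff_shift[of "\<lambda>i. \<bar>d i\<bar>" N] by simp
  then have d_tail_\<delta>: "summable (\<lambda>i. \<bar>d (i + N)\<bar> * \<delta>)"
    by (rule summable_mult2)
  then have tail: "summable (\<lambda>i. \<bar>d (i + N) * a (i + N)\<bar>)"
    by (rule summable_comparison_test') (use le in simp)
  then have "summable (\<lambda>i. d (i + N) * a (i + N))"
    by (rule summable_rabs_cancel)
  then have "summable (\<lambda>i. d i * a i)"
    using summable_iff_shift[of "\<lambda>i. d i * a i" N] by simp
  then have "(\<Sum>i. d i * a i) = (\<Sum>i. d (i + N) * a (i + N)) + (\<Sum>i<N. d i * a i)"
    by (rule suminf_split_initial_segment)
  moreover have "\<bar>\<Sum>i. d (i + N) * a (i + N)\<bar> \<le> (\<Sum>i. \<bar>d i\<bar>) * \<delta>"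
  proof -
    have "\<bar>\<Sum>i. d (i + N) * a (i + N)\<bar> \<le> (\<Sum>i. \<bar>d (i + N) * a (i + N)\<bar>)"
      by (rule summable_rabs[OF tail])
    also have "\<dots> \<le> (\<Sum>i. \<bar>d (i + N)\<bar> * \<delta>)"
      by (rule suminf_le[OF le tail d_tail_\<delta>])
    also have "\<dots> = (\<Sum>i. \<bar>d (i + N)\<bar>) * \<delta>"
      by (rule suminf_mult2[OF d_tail, symmetric])
    also have "\<dots> \<le> (\<Sum>i. \<bar>d i\<bar>) * \<delta>"
    proof (rule mult_right_mono[OF _ \<delta>])
      show "(\<Sum>i. \<bar>d (i + N)\<bar>) \<le> (\<Sum>i. \<bar>d i\<bar>)"
        using suminf_minus_initial_segment[OF d, of N] by (simp add: sum_nonneg)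
    qed
    finally show ?thesis .
  qed
  ultimately show ?thesis
    by linarith
qed

lemma tendsto_suminf_mult_zero:
  fixes d :: "nat \<Rightarrow> nat \<Rightarrow> real"
  assumes d: "\<And>k. summable (\<lambda>i. \<bar>d k i\<bar>)" and bound: "\<And>k. (\<Sum>i. \<bar>d k i\<bar>) \<le> C"
    and pw: "\<And>i. (\<lambda>k. d k i) \<longlonglongrightarrow> 0" and a: "a \<longlonglongrightarrow> 0"
  shows "(\<lambda>k. \<Sum>i. d k i * a i) \<longlonglongrightarrow> 0"
proof (rule LIMSEQ_I)
  fix e :: real assume e: "0 < e"
  have C: "0 \<le> C"
    using bound[of 0] suminf_nonneg[OF d[of 0]] by simp
  define \<delta> where "\<delta> = e / (2 * (C + 1))"
  have "0 < \<delta>" and \<delta>C: "C * \<delta> < e / 2"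
    using e C by (auto simp: \<delta>_def field_simps)
  obtain N where N: "\<And>i. N \<le> i \<Longrightarrow> \<bar>a i\<bar> \<le> \<delta>"
    using LIMSEQ_D[OF a \<open>0 < \<delta>\<close>] by (metis diff_zero less_imp_le real_norm_def)
  have "(\<lambda>k. \<Sum>i<N. d k i * a i) \<longlonglongrightarrow> (\<Sum>i<N. 0 * a i)"
    by (intro tendsto_intros pw)
  then obtain K where K: "\<And>k. K \<le> k \<Longrightarrow> \<bar>\<Sum>i<N. d k i * a i\<bar> < e / 2"
    using LIMSEQ_D[of _ 0 "e / 2"] e by fastforce
  have "\<bar>\<Sum>i. d k i * a i\<bar> < e" if "K \<le> k" for k
  proof -
    have "\<bar>\<Sum>i. d k i * a i\<bar> \<le> \<bar>\<Sum>i<N. d k i * a i\<bar> + (\<Sum>i. \<bar>d k i\<bar>) * \<delta>"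
      using abs_suminf_mult_le_initial_plus_tail[OF d N] .
    also have "(\<Sum>i. \<bar>d k i\<bar>) * \<delta> \<le> C * \<delta>"
      using bound[of k] \<open>0 < \<delta>\<close> by (simp add: mult_right_mono)
    finally show ?thesis
      using K[OF that] \<delta>C by linarith
  qed
  then show "\<exists>K. \<forall>k\<ge>K. norm ((\<Sum>i. d k i * a i) - 0) < e"
    by auto
qed

lemma l1_c0_pairing_tendsto:
  assumes u: "\<And>k. in_l1 (u k)" and bound: "\<And>k. l1_norm (u k) \<le> M"
    and pw: "\<And>i. (\<lambda>k. u k i) \<longlonglongrightarrow> v i" and a: "a \<longlonglongrightarrow> 0"
  shows "(\<lambda>k. \<Sum>i. u k i * a i) \<longlonglongrightarrow> (\<Sum>i. v i * a i)"
proof -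
  have "eventually (\<lambda>k. l1_norm (u k) \<le> M) sequentially"
    using bound by simp
  note v = l1_norm_le_pointwise_limit[OF u this pw]
  obtain B where B: "\<And>i. \<bar>a i\<bar> \<le> B"
    using convergent_imp_Bseq[of a] a by (auto simp: Bseq_def convergent_def)
  define d where "d k i = u k i - v i" for k i
  have d: "summable (\<lambda>i. \<bar>d k i\<bar>)" "(\<Sum>i. \<bar>d k i\<bar>) \<le> 2 * M" for k
  proof -
    have s: "summable (\<lambda>i. \<bar>u k i\<bar> + \<bar>v i\<bar>)"
      using u[of k] v(1) by (simp add: in_l1_def summable_add)
    then show d_summable: "summable (\<lambda>i. \<bar>d k i\<bar>)"
      by (rule summable_comparison_test') (simp add: d_def abs_triangle_ineq4)
    have "(\<Sum>i. \<bar>d k i\<bar>) \<le> (\<Sum>i. \<bar>u k i\<bar> + \<bar>v i\<bar>)"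
      using d_summable s by (intro suminf_le) (auto simp: d_def abs_triangle_ineq4)
    also have "\<dots> = l1_norm (u k) + l1_norm v"
      using u[of k] v(1) by (simp add: in_l1_def l1_norm_def suminf_add)
    finally show "(\<Sum>i. \<bar>d k i\<bar>) \<le> 2 * M"
      using bound[of k] v(2) by simp
  qed
  have d_pw: "(\<lambda>k. d k i) \<longlonglongrightarrow> 0" for i
    using tendsto_diff[OF pw[of i] tendsto_const[of "v i"]] by (simp add: d_def)
  have pairing_summable: "summable (\<lambda>i. w i * a i)" if "in_l1 w" for w
    by (rule summable_rabs_cancel[OF summable_l1_mult_bounded[OF that B]])
  have split: "(\<Sum>i. u k i * a i) = (\<Sum>i. d k i * a i) + (\<Sum>i. v i * a i)" for k
  proof -
    have "(\<Sum>i. d k i * a i) = (\<Sum>i. u k i * a i) - (\<Sum>i. v i * a i)"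
      unfolding d_def left_diff_distrib
      by (rule suminf_diff[OF pairing_summable[OF u] pairing_summable[OF v(1)], symmetric])
    then show ?thesis
      by simp
  qed
  show ?thesis
    unfolding split using tendsto_add[OF tendsto_suminf_mult_zero[OF d d_pw a] tendsto_const]
    by simp
qed

lemma feasible_closed_under_pointwise_limits:
  assumes A: "bounded_linear_c0 A" and U: "\<And>k. U k \<in> feasible A Hn f"
    and bound: "\<And>k. l1_norm (U k) \<le> M" and pw: "\<And>i. (\<lambda>k. U k i) \<longlonglongrightarrow> v i"
  shows "v \<in> feasible A Hn f"
proof -
  have U_l1: "in_l1 (U k)" for k
    using U by (simp add: feasible_def)
  have "adj_pair A v z = z \<bullet> f" if "z \<in> Hn" for z
  proof (rule LIMSEQ_unique)
    have "A z \<longlonglongrightarrow> 0"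
      using A by (simp add: bounded_linear_c0_def)
    then show "(\<lambda>k. adj_pair A (U k) z) \<longlonglongrightarrow> adj_pair A v z"
      unfolding adj_pair_def by (rule l1_c0_pairing_tendsto[OF U_l1 bound pw])
    show "(\<lambda>k. adj_pair A (U k) z) \<longlonglongrightarrow> z \<bullet> f"
      using U that by (simp add: feasible_def)
  qed
  moreover have "eventually (\<lambda>k. l1_norm (U k) \<le> M) sequentially"
    using bound by simp
  then have "in_l1 v"
    by (rule l1_norm_le_pointwise_limit(1)[OF U_l1 _ pw])
  ultimately show ?thesis
    by (simp add: feasible_def)
qed

lemma bounded_imp_pointwise_convergent_subseq:
  fixes x :: "nat \<Rightarrow> 'i::countable \<Rightarrow> real"
  assumes "\<And>k i. \<bar>x k i\<bar> \<le> M"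
  obtains r v where "strict_mono r" "\<And>i. (\<lambda>k. x (r k) i) \<longlonglongrightarrow> v i"
proof -
  have "compact (PiE UNIV (\<lambda>_. {-M..M}))"
    using compactin_PiE[of "\<lambda>_. euclidean" UNIV "\<lambda>_. {-M..M}"]
    by (simp add: euclidean_product_topology)
  moreover have "x k \<in> PiE UNIV (\<lambda>_. {-M..M})" for k
    using assms by (simp add: PiE_UNIV_domain abs_le_iff minus_le_iff)
  ultimately obtain v r where "strict_mono r" "(x \<circ> r) \<longlonglongrightarrow> v"
    by (metis compact_imp_seq_compact seq_compactE)
  moreover have "(\<lambda>k. (x \<circ> r) k i) \<longlonglongrightarrow> v i" for i
    using \<open>(x \<circ> r) \<longlonglongrightarrow> v\<close> limitin_componentwise[of "\<lambda>_. euclidean" UNIV "x \<circ> r" v sequentially]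
    by (simp add: euclidean_product_topology)
  ultimately show ?thesis
    using that by auto
qed

lemma l1_minimizer_exists:
  assumes "F \<noteq> {}" and F: "\<And>u. u \<in> F \<Longrightarrow> in_l1 u"
    and closed: "\<And>U M v. (\<And>k. U k \<in> F) \<Longrightarrow> (\<And>k. l1_norm (U k) \<le> M)
                   \<Longrightarrow> (\<And>i. (\<lambda>k. U k i) \<longlonglongrightarrow> v i) \<Longrightarrow> v \<in> F"
  shows "\<exists>v\<in>F. \<forall>u\<in>F. l1_norm v \<le> l1_norm u"
proof -
  define m where "m = Inf (l1_norm ` F)"
  have bdd: "bdd_below (l1_norm ` F)"
    using F l1_norm_nonneg by (intro bdd_belowI[of _ 0]) auto
  have m_le: "m \<le> l1_norm u" if "u \<in> F" for u
    unfolding m_def using bdd that by (simp add: cInf_lower)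
  have "\<exists>u\<in>F. l1_norm u < m + inverse (real (Suc k))" for k
    using cInf_lessD[of "l1_norm ` F" "m + inverse (real (Suc k))"] \<open>F \<noteq> {}\<close>
    unfolding m_def by auto
  then obtain U where U: "\<And>k. U k \<in> F" and U_less: "\<And>k. l1_norm (U k) < m + inverse (real (Suc k))"
    by metis
  have U_bound: "l1_norm (U k) \<le> m + 1" for k
    using U_less[of k] inverse_le_1_iff[of "real (Suc k)"] by linarith
  then obtain r v where r: "strict_mono r" and pw: "\<And>i. (\<lambda>k. U (r k) i) \<longlonglongrightarrow> v i"
    using bounded_imp_pointwise_convergent_subseq[of "\<lambda>k. U k" "m + 1"]
      abs_le_l1_norm F U order_trans by metis
  have upper: "(\<lambda>k. m + inverse (real (Suc k))) \<longlonglongrightarrow> m"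
    using tendsto_add[OF tendsto_const LIMSEQ_inverse_real_of_nat, of m] by simp
  have "(\<lambda>k. l1_norm (U k)) \<longlonglongrightarrow> m"
    by (rule real_tendsto_sandwich[OF _ _ tendsto_const upper])
      (use m_le U U_less in \<open>auto intro!: always_eventually less_imp_le\<close>)
  then have norm_lim: "(\<lambda>k. l1_norm (U (r k))) \<longlonglongrightarrow> m"
    using LIMSEQ_subseq_LIMSEQ[OF _ r] by (auto simp: comp_def)
  have "l1_norm v \<le> m + e" if "0 < e" for e
  proof (rule l1_norm_le_pointwise_limit(2)[of "\<lambda>k. U (r k)"])
    show "in_l1 (U (r k))" for k
      using F U by blast
    show "eventually (\<lambda>k. l1_norm (U (r k)) \<le> m + e) sequentially"
      using order_tendstoD(2)[OF norm_lim, of "m + e"] that by (auto elim: eventually_mono)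
  qed (rule pw)
  then have "l1_norm v \<le> m"
    by (rule field_le_epsilon)
  moreover have "v \<in> F"
    by (rule closed[of "\<lambda>k. U (r k)" "m + 1" v]) (use U U_bound pw in simp_all)
  ultimately show ?thesis
    using m_le order_trans by blast
qed

theorem proposition1:
  fixes A :: "'a::{real_inner, complete_space} \<Rightarrow> (nat \<Rightarrow> real)"
    and Hn :: "'a set" and n :: nat and f :: 'a
  assumes "bounded_linear_c0 A"
    and "subspace Hn"
    and "\<exists>B. finite B \<and> independent B \<and> span B = Hn \<and> card B = n"
    and "\<forall>z\<in>Hn. (\<forall>i. A z i = 0) \<longrightarrow> z = 0"
  shows "argmin_l1 A Hn f \<noteq> {}"
proof -
  obtain B where "finite B" and Hn: "Hn = span B"
    using assms(3) by blast
  have "feasible A Hn f \<noteq> {}"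
    unfolding Hn by (rule feasible_nonempty[OF assms(1) \<open>finite B\<close>]) (use assms(4) Hn in blast)
  then have "\<exists>v\<in>feasible A Hn f. \<forall>u\<in>feasible A Hn f. l1_norm v \<le> l1_norm u"
  proof (rule l1_minimizer_exists)
    show "in_l1 u" if "u \<in> feasible A Hn f" for u
      using that by (simp add: feasible_def)
  qed (rule feasible_closed_under_pointwise_limits[OF assms(1)])
  then show ?thesis
    unfolding argmin_l1_def by blast
qed

end
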